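(* Let $p(\cdot)\in\mathcal{P}^{\log}_{0}(\mathbb{R}^{3})$ with $2\leq p^{-}\leq p(\cdot)\leq p^{+}\leq 6$, and $1\leq\rho\leq\infty$. Then there exists a positive constant $C$ such that for any $u_{0}\in F\dot{B}^{1-\frac{3}{p(\cdot)}}_{p(\cdot),1}(\mathbb{R}^{3})$, \[ \|e^{t\Delta}u_{0}\|_{\mathcal{Y}_{t}}\leq C\|u_{0}\|_{F\dot{B}^{1-\frac{3}{p(\cdot)}}_{p(\cdot),1}}. \]
   Context: $e^{t\Delta}$ is the Fourier multiplier $e^{-t|\xi|^2}$. Fourier transform: $\widehat f(\xi)=(2\pi)^{-3/2}\int f(x)e^{-ix\cdot\xi}dx$. Let $\chi$ be a smooth radial non-increasing function supported in $B(0,\frac43)$ with $\chi\equiv1$ on $B(0,\frac34)$; $\varphi(\xi)=\chi(\xi/2)-\chi(\xi)$, $\varphi_j(\xi)=\varphi(2^{-j}\xi)$, $S_jf=\mathcal{F}^{-1}(\chi(2^{-j}\cdot)\widehat f)$; $\mathcal{S}'_h$ is the set of tempered distributions with $S_jf\to0$ as $j\to-\infty$. Constant exponents: $\|f\|_{F\dot B^s_{p,1}}=\sum_j2^{js}\|\varphi_j\widehat f\|_{L^p}$ and $\|f\|_{\mathcal{L}^\lambda_t(F\dot B^s_{p,1})}=\sum_j2^{js}\|\varphi_j\widehat f\|_{L^\lambda(0,\infty;L^p_\xi)}$. Variable exponents: $\mathcal{P}_0$ is the set of measurable $p:\mathbb{R}^3\to[1,\infty)$ with $1<p^-:=\operatorname{ess\,inf}p$,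 $p^+:=\operatorname{ess\,sup}p<\infty$; $\|f\|_{L^{p(\cdot)}}=\inf\{\lambda>0:\int|f/\lambda|^{p(x)}dx\le1\}$; $\mathcal{P}_0^{\log}$ is the set of $p\in\mathcal{P}_0$ such that $1/p_\infty=\lim_{|x|\to\infty}1/p(x)$ exists and for some $C$, $|1/p(x)-1/p(y)|\le C/\log(e+1/|x-y|)$ and $|1/p(x)-1/p_\infty|\le C/\log(e+|x|)$. For a function $s(\cdot)$: $\|f\|_{F\dot B^{s(\cdot)}_{p(\cdot),1}}=\sum_j\|2^{js(\cdot)}\varphi_j\widehat f\|_{L^{p(\cdot)}}$ and $\|f\|_{\mathcal{L}^\rho_t(F\dot B^{s(\cdot)}_{p(\cdot),1})}=\sum_j\|2^{js(\cdot)}\varphi_j\widehat f\|_{L^\rho(0,\infty;L^{p(\cdot)}_\xi)}$, with $2^{js(\cdot)}$ the function $\xi\mapsto 2^{js(\xi)}$. The space $\mathcal{Y}_t=\mathcal{L}^{\rho}(0,\infty;F\dot{B}^{1-\frac{3}{p(\cdot)}+\frac{2}{\rho}}_{p(\cdot),1})\cap\mathcal{L}^{1}(0,\infty;F\dot{B}^{\frac{3}{2}}_{2,1})\cap\mathcal{L}^{\infty}(0,\infty;F\dot{B}^{-\frac{1}{2}}_{2,1})$ with norm $\|u\|_{\mathcal{Y}_t}=\max\{\|u\|_{\mathcal{L}^\rho_t(F\dot B^{1-\frac{3}{p(\cdot)}+\frac2\rho}_{p(\cdot),1})},\|u\|_{\mathcal{L}^1_t(F\dot B^{\frac32}_{2,1})},\|u\|_{\mathcal{L}^\infty_t(F\dot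 B^{-\frac12}_{2,1})}\}$. *)

theory Defs
  imports "HOL-Analysis.Analysis"
begin

text \<open>A tempered distribution u0 enters every norm only through its Fourier
  transform; we therefore work directly with uhat = Fourier transform of u0,
  a function real^3 to complex.\<close>

coinductive smooth3 :: "(real^3 \<Rightarrow> real) \<Rightarrow> bool" where
  "(\<forall>x. f differentiable (at x)) \<Longrightarrow>
   (\<forall>i. smooth3 (\<lambda>x. frechet_derivative f (at x) (axis i 1))) \<Longrightarrow> smooth3 f"

definition admissible_chi :: "(real^3 \<Rightarrow> real) \<Rightarrow> bool" where
  "admissible_chi chi \<longleftrightarrow> smooth3 chi
     \<and> (\<forall>x y. norm x = norm y \<longrightarrow> chi x = chi y)
     \<and> (\<forall>x y. norm x \<le> norm y \<longrightarrow> chi y \<le> chi x)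
     \<and> (\<forall>x. 4/3 \<le> norm x \<longrightarrow> chi x = 0)
     \<and> (\<forall>x. norm x \<le> 3/4 \<longrightarrow> chi x = 1)"

definition phi :: "(real^3 \<Rightarrow> real) \<Rightarrow> real^3 \<Rightarrow> real" where
  "phi chi xi = chi ((1/2) *\<^sub>R xi) - chi xi"

definition phi_j :: "(real^3 \<Rightarrow> real) \<Rightarrow> int \<Rightarrow> real^3 \<Rightarrow> real" where
  "phi_j chi j xi = phi chi ((2 powr (- real_of_int j)) *\<^sub>R xi)"

definition epowr :: "ennreal \<Rightarrow> real \<Rightarrow> ennreal" where
  "epowr x r = (if x = \<infinity> then \<infinity> else ennreal (enn2real x powr r))"

definition P0_log :: "(real^3 \<Rightarrow> real) \<Rightarrow> bool" where
  "P0_log p \<longleftrightarrow> p \<in> borel_measurable lborel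
     \<and> (\<forall>x. 1 \<le> p x)
     \<and> 1 < (SUP c\<in>{c. AE x in lborel. c \<le> p x}. c)
     \<and> (\<exists>c. AE x in lborel. p x \<le> c)
     \<and> (\<exists>pinf::real. ((\<lambda>x. 1 / p x) \<longlongrightarrow> 1 / pinf) (at_infinity)
          \<and> (\<exists>C. (\<forall>x y. \<bar>1 / p x - 1 / p y\<bar> \<le> C / ln (exp 1 + 1 / norm (x - y)))
                \<and> (\<forall>x. \<bar>1 / p x - 1 / pinf\<bar> \<le> C / ln (exp 1 + norm x))))"

definition vlp_norm :: "(real^3 \<Rightarrow> real) \<Rightarrow> (real^3 \<Rightarrow> complex) \<Rightarrow> ennreal" where
  "vlp_norm p f = Inf {ennreal lam | lam. lam > 0 \<and>
      (\<integral>\<^sup>+ x. ennreal ((norm (f x) / lam) powr p x) \<partial>lborel) \<le> 1}"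

definition lp_norm :: "real \<Rightarrow> (real^3 \<Rightarrow> complex) \<Rightarrow> ennreal" where
  "lp_norm q f = epowr (\<integral>\<^sup>+ x. ennreal (norm (f x) powr q) \<partial>lborel) (1 / q)"

definition time_norm :: "ennreal \<Rightarrow> (real \<Rightarrow> ennreal) \<Rightarrow> ennreal" where
  "time_norm rho N =
     (if rho = \<infinity> then Inf {c. AE t in lborel. t > 0 \<longrightarrow> N t \<le> c}
      else epowr (\<integral>\<^sup>+ t. indicator {0<..} t * epowr (N t) (enn2real rho) \<partial>lborel)
                 (1 / enn2real rho))"

definition FB_var_norm :: "(real^3 \<Rightarrow> real) \<Rightarrow> (real^3 \<Rightarrow> real) \<Rightarrow> (real^3 \<Rightarrow> real)
      \<Rightarrow> (real^3 \<Rightarrow> complex) \<Rightarrow> ennreal" where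
  "FB_var_norm chi s p uhat = (\<Sum>\<^sub>\<infinity>j\<in>(UNIV::int set).
      vlp_norm p (\<lambda>xi. complex_of_real (2 powr (real_of_int j * s xi) * phi_j chi j xi) * uhat xi))"

definition LFB_var_norm :: "(real^3 \<Rightarrow> real) \<Rightarrow> ennreal \<Rightarrow> (real^3 \<Rightarrow> real) \<Rightarrow> (real^3 \<Rightarrow> real)
      \<Rightarrow> (real \<Rightarrow> real^3 \<Rightarrow> complex) \<Rightarrow> ennreal" where
  "LFB_var_norm chi rho s p F = (\<Sum>\<^sub>\<infinity>j\<in>(UNIV::int set).
      time_norm rho (\<lambda>t. vlp_norm p
         (\<lambda>xi. complex_of_real (2 powr (real_of_int j * s xi) * phi_j chi j xi) * F t xi)))"

definition LFB_norm :: "(real^3 \<Rightarrow> real) \<Rightarrow> ennreal \<Rightarrow> real \<Rightarrow> real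
      \<Rightarrow> (real \<Rightarrow> real^3 \<Rightarrow> complex) \<Rightarrow> ennreal" where
  "LFB_norm chi lam s q F = (\<Sum>\<^sub>\<infinity>j\<in>(UNIV::int set).
      ennreal (2 powr (real_of_int j * s)) *
      time_norm lam (\<lambda>t. lp_norm q (\<lambda>xi. complex_of_real (phi_j chi j xi) * F t xi)))"

text \<open>Fourier transform of the heat flow e^{t Delta} u0.\<close>
definition heat_hat :: "(real^3 \<Rightarrow> complex) \<Rightarrow> real \<Rightarrow> real^3 \<Rightarrow> complex" where
  "heat_hat uhat t xi = complex_of_real (exp (- t * (norm xi)\<^sup>2)) * uhat xi"

definition Y_norm :: "(real^3 \<Rightarrow> real) \<Rightarrow> ennreal \<Rightarrow> (real^3 \<Rightarrow> real)
      \<Rightarrow> (real \<Rightarrow> real^3 \<Rightarrow> complex) \<Rightarrow> ennreal" where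
  "Y_norm chi rho p F = max (LFB_var_norm chi rho
        (\<lambda>xi. 1 - 3 / p xi + (if rho = \<infinity> then 0 else 2 / enn2real rho)) p F)
      (max (LFB_norm chi 1 (3/2) 2 F) (LFB_norm chi \<infinity> (-1/2) 2 F))"

end

theory Submission
  imports Defs
begin

text \<open>
  On the support of varphi_j one has |xi| > (3/4) 2^j, so on the j-th dyadic block the heat
  multiplier is at most exp(-(9/16) 4^j t). Taking the L^rho norm in time turns this into the
  factor 4^(-j/rho), which exactly compensates the extra regularity 2/rho in the first
  component of Y_t; for rho = infinity the multiplier is simply bounded by 1.
  The two L^2-based components are reduced to the variable-exponent norm of u0 by the block
  embedding ||varphi_j f||_2 <= C 2^(j/2) ||2^(j(1 - 3/p(.))) varphi_j f||_(p(.)).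
  It holds because p >= 2 and the block lives on a ball of volume about 2^(3j): pointwise, by
  Young's inequality with exponents p/2 and p/(p-2), |varphi_j f|^2 is at most 2^j times the
  Luxemburg modular plus 2^(-3j) on that ball.
\<close>

section \<open>Dyadic annuli\<close>

lemma admissible_chiD:
  assumes "admissible_chi chi"
  shows "smooth3 chi" "\<And>x. 4/3 \<le> norm x \<Longrightarrow> chi x = 0" "\<And>x. norm x \<le> 3/4 \<Longrightarrow> chi x = 1"
  using assms unfolding admissible_chi_def by blast+

lemma admissible_chi_continuous:
  assumes "admissible_chi chi"
  shows "continuous_on UNIV chi"
proof -
  have "\<forall>x. chi differentiable (at x)"
    using admissible_chiD(1)[OF assms] by (cases rule: smooth3.cases) auto
  then show ?thesis
    by (meson differentiable_imp_continuous_within continuous_at_imp_continuous_on)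
qed

lemma borel_measurable_phi_j:
  assumes "admissible_chi chi"
  shows "phi_j chi j \<in> borel_measurable borel"
proof -
  have [measurable]: "chi \<in> borel_measurable borel"
    using admissible_chi_continuous[OF assms] by (rule borel_measurable_continuous_onI)
  show ?thesis unfolding phi_j_def[abs_def] phi_def by measurable
qed

lemma phi_nonzero_imp_annulus:
  assumes "admissible_chi chi" "phi chi y \<noteq> 0"
  shows "3/4 < norm y" "norm y < 8/3"
proof -
  note chi0 = admissible_chiD(2)[OF assms(1)] and chi1 = admissible_chiD(3)[OF assms(1)]
  show "3/4 < norm y"
  proof (rule ccontr)
    assume "\<not> 3/4 < norm y"
    then have "chi y = 1" "chi ((1/2) *\<^sub>R y) = 1" by (auto intro: chi1)
    then show False using assms(2) by (simp add: phi_def)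
  qed
  show "norm y < 8/3"
  proof (rule ccontr)
    assume "\<not> norm y < 8/3"
    then have "chi y = 0" "chi ((1/2) *\<^sub>R y) = 0" by (auto intro: chi0)
    then show False using assms(2) by (simp add: phi_def)
  qed
qed

lemma phi_j_nonzero_imp_annulus:
  assumes "admissible_chi chi" "phi_j chi j xi \<noteq> 0"
  shows "3/4 * 2 powr real_of_int j < norm xi" "norm xi < 8/3 * 2 powr real_of_int j"
proof -
  let ?c = "2 powr (- real_of_int j)"
  have "phi chi (?c *\<^sub>R xi) \<noteq> 0" using assms(2) by (simp add: phi_j_def)
  then have "3/4 < norm (?c *\<^sub>R xi)" "norm (?c *\<^sub>R xi) < 8/3"
    by (rule phi_nonzero_imp_annulus[OF assms(1)])+
  then have lo: "3/4 < ?c * norm xi" and hi: "?c * norm xi < 8/3" by simp_all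
  have pos: "0 < 2 powr real_of_int j" by simp
  have eq: "?c * norm xi * 2 powr real_of_int j = norm xi"
    by (simp add: powr_minus)
  show "3/4 * 2 powr real_of_int j < norm xi"
    using mult_strict_right_mono[OF lo pos] eq by simp
  show "norm xi < 8/3 * 2 powr real_of_int j"
    using mult_strict_right_mono[OF hi pos] eq by simp
qed

section \<open>Extended reals, Luxemburg norms and time norms\<close>

lemma ennreal_le_mult_if_less:
  fixes X Y :: ennreal
  assumes "0 < K" "\<And>l. 0 < l \<Longrightarrow> Y < ennreal l \<Longrightarrow> X \<le> ennreal (K * l)"
  shows "X \<le> ennreal K * Y"
proof (cases Y)
  case (real y)
  show ?thesis
  proof (rule ennreal_le_epsilon)
    fix e :: real assume "0 < e"
    then have "0 < e / K" using assms(1) by simp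
    then have "X \<le> ennreal (K * (y + e / K))"
      using real by (intro assms(2)) (auto simp: ennreal_less_iff add_nonneg_pos)
    also have "K * (y + e / K) = K * y + e"
      using assms(1) by (simp add: field_simps)
    also have "ennreal (K * y + e) = ennreal K * Y + ennreal e"
      using real \<open>0 < e\<close> assms(1) by (simp add: ennreal_plus ennreal_mult)
    finally show "X \<le> ennreal K * Y + ennreal e" .
  qed
next
  case top
  then show ?thesis using assms(1) by (simp add: ennreal_mult_top)
qed

lemma epowr_le_ennreal:
  assumes "X \<le> ennreal y" "0 \<le> y" "0 \<le> r"
  shows "epowr X r \<le> ennreal (y powr r)"
  using assms by (cases X) (auto simp: epowr_def top_unique intro!: ennreal_leI powr_mono2)

lemma infsum_le_cmult_infsum:
  fixes f g :: "'a \<Rightarrow> ennreal"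
  assumes "\<And>j. j \<in> A \<Longrightarrow> f j \<le> c * g j"
  shows "infsum f A \<le> c * infsum g A"
proof -
  have "infsum f A \<le> infsum (\<lambda>j. c * g j) A"
    using assms by (intro infsum_mono nonneg_summable_on_complete) auto
  also have "\<dots> \<le> c * infsum g A"
  proof (rule infsum_le_finite_sums)
    fix F assume F: "finite F" "F \<subseteq> A"
    then have "sum g F = infsum g F" by simp
    also have "\<dots> \<le> infsum g A"
      using F by (intro infsum_mono_neutral nonneg_summable_on_complete) auto
    finally have "sum g F \<le> infsum g A" .
    then show "(\<Sum>j\<in>F. c * g j) \<le> c * infsum g A"
      by (simp add: sum_distrib_left[symmetric] mult_left_mono)
  qed (simp add: nonneg_summable_on_complete)
  finally show ?thesis .
qed

lemma vlp_norm_le: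
  assumes "0 < l" "(\<integral>\<^sup>+x. ennreal ((norm (f x) / l) powr p x) \<partial>lborel) \<le> 1"
  shows "vlp_norm p f \<le> ennreal l"
  unfolding vlp_norm_def by (rule Inf_lower) (use assms in auto)

lemma vlp_modular_le_one:
  assumes "vlp_norm p f < ennreal l" "0 < l" "AE x in lborel. 0 \<le> p x"
  shows "(\<integral>\<^sup>+x. ennreal ((norm (f x) / l) powr p x) \<partial>lborel) \<le> 1"
proof -
  obtain l' where l': "0 < l'" "l' < l"
      "(\<integral>\<^sup>+x. ennreal ((norm (f x) / l') powr p x) \<partial>lborel) \<le> 1"
    using assms(1) unfolding vlp_norm_def Inf_less_iff by (auto simp: ennreal_less_iff)
  have "(\<integral>\<^sup>+x. ennreal ((norm (f x) / l) powr p x) \<partial>lborel)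
      \<le> (\<integral>\<^sup>+x. ennreal ((norm (f x) / l') powr p x) \<partial>lborel)"
    using assms(3)
    by (intro nn_integral_mono_AE, eventually_elim)
      (use l' in \<open>auto intro!: ennreal_leI powr_mono2 divide_left_mono\<close>)
  then show ?thesis using l'(3) by simp
qed

lemma vlp_norm_mono:
  assumes "0 < k" "AE x in lborel. 0 \<le> p x" "\<And>x. norm (f x) \<le> k * norm (g x)"
  shows "vlp_norm p f \<le> ennreal k * vlp_norm p g"
proof (rule ennreal_le_mult_if_less[OF assms(1)])
  fix l assume l: "0 < l" "vlp_norm p g < ennreal l"
  have "(\<integral>\<^sup>+x. ennreal ((norm (f x) / (k * l)) powr p x) \<partial>lborel)
      \<le> (\<integral>\<^sup>+x. ennreal ((norm (g x) / l) powr p x) \<partial>lborel)"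
    using assms(2)
  proof (intro nn_integral_mono_AE, eventually_elim)
    case (elim x)
    have "norm (f x) / (k * l) \<le> norm (g x) / l"
      using assms(1,3) l(1) by (simp add: field_simps)
    then show ?case using elim assms(1) l(1) by (intro ennreal_leI powr_mono2) auto
  qed
  also have "\<dots> \<le> 1" by (rule vlp_modular_le_one[OF l(2,1) assms(2)])
  finally show "vlp_norm p f \<le> ennreal (k * l)"
    using assms(1) l(1) by (intro vlp_norm_le) auto
qed

lemma time_norm_infinity_le:
  assumes "\<And>t. 0 < t \<Longrightarrow> N t \<le> Y"
  shows "time_norm \<infinity> N \<le> Y"
  unfolding time_norm_def using assms by (auto intro!: Inf_lower AE_I2)

lemma nn_integral_exp_decay:
  assumes "0 < a"
  shows "(\<integral>\<^sup>+t. indicator {0..} t * ennreal (exp (- a * t)) \<partial>lborel) = ennreal (1 / a)"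
proof -
  have "(\<integral>\<^sup>+t. ennreal (indicator {0..} t * exp (- a * t)) \<partial>lborel) = ennreal (exp (- a * 0) / a)"
    by (rule nn_integral_has_integral_lebesgue[OF _ has_integral_exp_minus_to_infinity[OF assms]]) simp
  then show ?thesis by (simp add: indicator_mult_ennreal mult.commute)
qed

lemma nn_integral_epowr_exp_decay_le:
  assumes r: "1 \<le> r" and b: "0 < b" and y: "0 \<le> y"
    and decay: "\<And>t. 0 < t \<Longrightarrow> N t \<le> ennreal (exp (- b * t) * y)"
  shows "(\<integral>\<^sup>+t. indicator {0<..} t * epowr (N t) r \<partial>lborel) \<le> ennreal (y powr r / (r * b))"
proof -
  have "(\<integral>\<^sup>+t. indicator {0<..} t * epowr (N t) r \<partial>lborel)
      \<le> (\<integral>\<^sup>+t. ennreal (y powr r) * (indicator {0..} t * ennreal (exp (- (r * b) * t))) \<partial>lborel)"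
  proof (rule nn_integral_mono)
    fix t :: real
    show "indicator {0<..} t * epowr (N t) r
        \<le> ennreal (y powr r) * (indicator {0..} t * ennreal (exp (- (r * b) * t)))"
    proof (cases "0 < t")
      case True
      have "epowr (N t) r \<le> ennreal ((exp (- b * t) * y) powr r)"
        using decay[OF True] y r by (intro epowr_le_ennreal) auto
      also have "(exp (- b * t) * y) powr r = y powr r * exp (- (r * b) * t)"
        using y by (simp add: powr_mult exp_powr_real algebra_simps)
      finally show ?thesis using True y by (simp add: ennreal_mult)
    qed simp
  qed
  also have "\<dots> = ennreal (y powr r)
      * (\<integral>\<^sup>+t. indicator {0..} t * ennreal (exp (- (r * b) * t)) \<partial>lborel)"
    by (rule nn_integral_cmult) measurable
  also have "(\<integral>\<^sup>+t. indicator {0..} t * ennreal (exp (- (r * b) * t)) \<partial>lborel) = ennreal (1 / (r * b))"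
    using r b by (intro nn_integral_exp_decay) simp
  also have "ennreal (y powr r) * ennreal (1 / (r * b)) = ennreal (y powr r / (r * b))"
    using r b by (subst ennreal_mult[symmetric]) auto
  finally show ?thesis .
qed

lemma time_norm_exp_decay_le:
  assumes r: "1 \<le> r" and b: "0 < b"
    and decay: "\<And>t. 0 < t \<Longrightarrow> N t \<le> ennreal (exp (- b * t)) * Y"
  shows "time_norm (ennreal r) N \<le> ennreal (1 / (r * b) powr (1 / r)) * Y"
proof (cases Y)
  case top
  then show ?thesis using r b by (simp add: ennreal_mult_top)
next
  case (real y)
  have "time_norm (ennreal r) N = epowr (\<integral>\<^sup>+t. indicator {0<..} t * epowr (N t) r \<partial>lborel) (1 / r)"
    using r by (simp add: time_norm_def)
  also have "\<dots> \<le> ennreal ((y powr r / (r * b)) powr (1 / r))"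
    using r b real decay
    by (intro epowr_le_ennreal nn_integral_epowr_exp_decay_le) (auto simp: ennreal_mult)
  also have "(y powr r / (r * b)) powr (1 / r) = (y powr r) powr (1 / r) / (r * b) powr (1 / r)"
    by (rule powr_divide)
  also have "(y powr r) powr (1 / r) = y"
    using r real by (simp add: powr_powr)
  finally show ?thesis
    using real r b by (simp add: ennreal_mult[symmetric])
qed

section \<open>Embedding of weighted variable Lebesgue spaces into L2 on a ball\<close>

text \<open>Young's inequality for the exponents p/2 and p/(p-2), without its constants.\<close>

lemma sq_mult_powr_le_powr_add:
  fixes h p d lam :: real
  assumes "0 \<le> h" "2 \<le> p" "0 < lam"
  shows "h\<^sup>2 * lam powr (- d * (1 - 2/p)) \<le> h powr p + lam powr (- d)"
proof (cases "h \<le> lam powr (- d / p)")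
  case True
  have "h\<^sup>2 * lam powr (- d * (1 - 2/p)) \<le> (lam powr (- d / p))\<^sup>2 * lam powr (- d * (1 - 2/p))"
    using True assms(1) by (intro mult_right_mono power_mono) auto
  also have "\<dots> = lam powr (- d / p + - d / p + - d * (1 - 2/p))"
    by (simp only: power2_eq_square powr_add)
  also have "- d / p + - d / p + - d * (1 - 2/p) = - d"
    using assms(2) by (simp add: field_simps)
  finally show ?thesis using powr_ge_zero[of h p] by linarith
next
  case False
  then have "lam powr (- d / p) \<le> h" by simp
  then have "(lam powr (- d / p)) powr (p - 2) \<le> h powr (p - 2)"
    using assms(2) by (intro powr_mono2) auto
  moreover have "- d / p * (p - 2) = - d * (1 - 2/p)"
    using assms(2) by (simp add: field_simps)
  then have "(lam powr (- d / p)) powr (p - 2) = lam powr (- d * (1 - 2/p))"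
    by (simp only: powr_powr)
  ultimately have "h\<^sup>2 * lam powr (- d * (1 - 2/p)) \<le> h powr 2 * h powr (p - 2)"
    using assms(1) by (simp add: mult_left_mono powr_numeral)
  also have "\<dots> = h powr (2 + (p - 2))"
    unfolding powr_add ..
  also have "\<dots> = h powr p" by simp
  finally show ?thesis using powr_ge_zero[of lam "- d"] by linarith
qed

lemma sq_le_scaled_powr_add:
  fixes a q lam l :: real
  assumes a: "0 \<le> a" and q: "2 \<le> q" and lam: "0 < lam" and l: "0 < l"
  shows "a\<^sup>2 \<le> l\<^sup>2 * lam * ((lam powr (1 - 3 / q) * a / l) powr q + lam powr (-3))"
proof -
  define h where "h = lam powr (1 - 3 / q) * a / l"
  have "l * h * lam powr (- (1 - 3 / q)) = lam powr (1 - 3 / q) * lam powr (- (1 - 3 / q)) * a"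
    using l by (simp add: h_def)
  also have "lam powr (1 - 3 / q) * lam powr (- (1 - 3 / q)) = 1"
    using lam by (simp flip: powr_add)
  finally have "a = l * h * lam powr (- (1 - 3 / q))" by simp
  then have "a\<^sup>2 = l\<^sup>2 * (h\<^sup>2 * (lam powr (- (1 - 3 / q)))\<^sup>2)"
    by (simp only: power_mult_distrib mult.assoc)
  also have "(lam powr (- (1 - 3 / q)))\<^sup>2 = lam powr (- (1 - 3 / q) + - (1 - 3 / q))"
    by (simp only: power2_eq_square powr_add)
  also have "- (1 - 3 / q) + - (1 - 3 / q) = 1 + - 3 * (1 - 2 / q)"
    using q by (simp add: field_simps)
  also have "l\<^sup>2 * (h\<^sup>2 * lam powr (1 + - 3 * (1 - 2 / q)))
      = l\<^sup>2 * lam * (h\<^sup>2 * lam powr (- 3 * (1 - 2 / q)))"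
    unfolding powr_add using lam by (simp add: algebra_simps)
  also have "\<dots> \<le> l\<^sup>2 * lam * (h powr q + lam powr (-3))"
    using a q lam l by (intro mult_left_mono sq_mult_powr_le_powr_add) (auto simp: h_def)
  finally show ?thesis by (simp add: h_def)
qed

lemma powr_minus_3_mult_emeasure_ball:
  assumes lam: "0 < lam" and R: "0 \<le> R"
  shows "ennreal (lam powr (-3)) * emeasure lborel (ball (0::real^3) (R * lam))
           = ennreal (unit_ball_vol 3 * R ^ 3)"
proof -
  have "emeasure lborel (ball (0::real^3) (R * lam)) = ennreal (unit_ball_vol 3 * R ^ 3 * lam ^ 3)"
    using lam R by (simp add: emeasure_ball power_mult_distrib)
  moreover have "lam powr (-3) * (unit_ball_vol 3 * R ^ 3 * lam ^ 3) = unit_ball_vol 3 * R ^ 3"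
    using lam by (simp add: powr_minus field_simps)
  ultimately show ?thesis
    using lam R by (simp flip: ennreal_mult)
qed

lemma nn_integral_norm_sq_le:
  fixes f :: "real^3 \<Rightarrow> complex"
  assumes p_meas: "p \<in> borel_measurable borel" and f_meas: "f \<in> borel_measurable borel"
    and p_ge_2: "AE x in lborel. 2 \<le> p x" and lam: "0 < lam" and R: "0 \<le> R" and l: "0 < l"
    and supp: "\<And>x. f x \<noteq> 0 \<Longrightarrow> norm x < R * lam"
    and modular: "(\<integral>\<^sup>+x. ennreal ((lam powr (1 - 3 / p x) * norm (f x) / l) powr p x) \<partial>lborel) \<le> 1"
  shows "(\<integral>\<^sup>+x. ennreal (norm (f x) powr 2) \<partial>lborel)
           \<le> ennreal (lam * (1 + unit_ball_vol 3 * R ^ 3) * l\<^sup>2)"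
proof -
  define B where "B = ball (0::real^3) (R * lam)"
  let ?H = "\<lambda>x. (lam powr (1 - 3 / p x) * norm (f x) / l) powr p x"
  have [measurable]: "p \<in> borel_measurable borel" "f \<in> borel_measurable borel"
    using p_meas f_meas by auto
  have B_sets: "B \<in> sets lborel" by (simp add: B_def)
  have H_meas: "(\<lambda>x. ennreal (?H x)) \<in> borel_measurable lborel" by measurable
  have ind_meas: "(\<lambda>x. ennreal (lam powr (-3)) * indicator B x) \<in> borel_measurable lborel"
    using B_sets by measurable
  have "(\<integral>\<^sup>+x. ennreal (norm (f x) powr 2) \<partial>lborel)
      \<le> (\<integral>\<^sup>+x. ennreal (l\<^sup>2 * lam) * (ennreal (?H x) + ennreal (lam powr (-3)) * indicator B x) \<partial>lborel)"
    using p_ge_2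
  proof (intro nn_integral_mono_AE, eventually_elim)
    case (elim x)
    have "(norm (f x))\<^sup>2 \<le> l\<^sup>2 * lam * (?H x + lam powr (-3) * indicator B x)"
    proof (cases "f x = 0")
      case False
      then have "x \<in> B" using supp by (simp add: B_def)
      then show ?thesis using sq_le_scaled_powr_add[of "norm (f x)" "p x" lam l] elim lam l by simp
    qed (use l lam in simp)
    then have "ennreal (norm (f x) powr 2) \<le> ennreal (l\<^sup>2 * lam * (?H x + lam powr (-3) * indicator B x))"
      by (intro ennreal_leI) simp
    then show ?case
      using l lam by (cases "x \<in> B") (simp_all add: ennreal_mult ennreal_plus)
  qed
  also have "\<dots> = ennreal (l\<^sup>2 * lam) * ((\<integral>\<^sup>+x. ennreal (?H x) \<partial>lborel)
      + ennreal (lam powr (-3)) * emeasure lborel B)"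
    using H_meas ind_meas
    by (simp only: nn_integral_cmult[OF borel_measurable_add] nn_integral_add
        nn_integral_cmult_indicator[OF B_sets])
  also have "ennreal (lam powr (-3)) * emeasure lborel B = ennreal (unit_ball_vol 3 * R ^ 3)"
    unfolding B_def by (rule powr_minus_3_mult_emeasure_ball[OF lam R])
  also have "ennreal (l\<^sup>2 * lam) * ((\<integral>\<^sup>+x. ennreal (?H x) \<partial>lborel) + ennreal (unit_ball_vol 3 * R ^ 3))
      \<le> ennreal (l\<^sup>2 * lam) * ennreal (1 + unit_ball_vol 3 * R ^ 3)"
    using modular R by (intro mult_left_mono) (auto simp: ennreal_plus intro: add_right_mono)
  also have "\<dots> = ennreal (lam * (1 + unit_ball_vol 3 * R ^ 3) * l\<^sup>2)"
    using lam R by (subst ennreal_mult[symmetric]) (auto simp: mult_ac)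
  finally show ?thesis .
qed

lemma lp_norm_2_le_scaled_vlp_norm:
  fixes f :: "real^3 \<Rightarrow> complex"
  assumes p_meas: "p \<in> borel_measurable borel" and f_meas: "f \<in> borel_measurable borel"
    and p_ge_2: "AE x in lborel. 2 \<le> p x" and lam: "0 < lam" and R: "0 \<le> R"
    and supp: "\<And>x. f x \<noteq> 0 \<Longrightarrow> norm x < R * lam"
  shows "lp_norm 2 f \<le> ennreal (sqrt (lam * (1 + unit_ball_vol 3 * R ^ 3)))
           * vlp_norm p (\<lambda>x. complex_of_real (lam powr (1 - 3 / p x)) * f x)"
proof (rule ennreal_le_mult_if_less)
  define K where "K = lam * (1 + unit_ball_vol 3 * R ^ 3)"
  have K: "0 < K" using lam R by (simp add: K_def add_pos_nonneg)
  then show "0 < sqrt (lam * (1 + unit_ball_vol 3 * R ^ 3))" by (simp add: K_def)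
  fix l assume l: "0 < l" "vlp_norm p (\<lambda>x. complex_of_real (lam powr (1 - 3 / p x)) * f x) < ennreal l"
  have "AE x in lborel. 0 \<le> p x" using p_ge_2 by eventually_elim auto
  then have modular: "(\<integral>\<^sup>+x. ennreal ((lam powr (1 - 3 / p x) * norm (f x) / l) powr p x) \<partial>lborel) \<le> 1"
    using vlp_modular_le_one[OF l(2,1)] by (simp add: norm_mult)
  have "(\<integral>\<^sup>+x. ennreal (norm (f x) powr 2) \<partial>lborel) \<le> ennreal (K * l\<^sup>2)"
    unfolding K_def by (rule nn_integral_norm_sq_le[OF p_meas f_meas p_ge_2 lam R l(1) supp modular])
  then have "lp_norm 2 f \<le> ennreal ((K * l\<^sup>2) powr (1/2))"
    unfolding lp_norm_def using K by (intro epowr_le_ennreal) auto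
  also have "(K * l\<^sup>2) powr (1/2) = sqrt K * l"
    using K l(1) by (simp add: powr_half_sqrt real_sqrt_mult)
  finally show "lp_norm 2 f \<le> ennreal (sqrt (lam * (1 + unit_ball_vol 3 * R ^ 3)) * l)"
    by (simp add: K_def)
qed

section \<open>Dyadic blocks of the heat flow\<close>

definition dyadic_block :: "(real^3 \<Rightarrow> real) \<Rightarrow> (real^3 \<Rightarrow> real) \<Rightarrow> int
      \<Rightarrow> (real^3 \<Rightarrow> complex) \<Rightarrow> real^3 \<Rightarrow> complex" where
  "dyadic_block chi s j f xi = complex_of_real (2 powr (real_of_int j * s xi) * phi_j chi j xi) * f xi"

lemma FB_var_norm_eq_dyadic_block:
  "FB_var_norm chi s p f = (\<Sum>\<^sub>\<infinity>j\<in>UNIV. vlp_norm p (dyadic_block chi s j f))"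
  unfolding FB_var_norm_def dyadic_block_def ..

lemma LFB_var_norm_eq_dyadic_block:
  "LFB_var_norm chi rho s p F = (\<Sum>\<^sub>\<infinity>j\<in>UNIV. time_norm rho (\<lambda>t. vlp_norm p (dyadic_block chi s j (F t))))"
  unfolding LFB_var_norm_def dyadic_block_def ..

lemma dyadic_block_add_const:
  "dyadic_block chi (\<lambda>xi. s xi + c) j f xi
     = complex_of_real (2 powr (real_of_int j * c)) * dyadic_block chi s j f xi"
  by (simp add: dyadic_block_def distrib_left powr_add)

lemma norm_dyadic_block_heat_hat_le:
  assumes chi: "admissible_chi chi" and t: "0 \<le> t"
  shows "norm (dyadic_block chi s j (heat_hat uhat t) xi)
           \<le> exp (- (3/4 * 2 powr real_of_int j)\<^sup>2 * t) * norm (dyadic_block chi s j uhat xi)"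
proof (cases "phi_j chi j xi = 0")
  case False
  have "3/4 * 2 powr real_of_int j < norm xi"
    by (rule phi_j_nonzero_imp_annulus(1)[OF chi False])
  then have "(3/4 * 2 powr real_of_int j)\<^sup>2 \<le> (norm xi)\<^sup>2"
    by (intro power_mono) auto
  then have "(3/4 * 2 powr real_of_int j)\<^sup>2 * t \<le> (norm xi)\<^sup>2 * t"
    using t by (rule mult_right_mono)
  then have decay: "exp (- t * (norm xi)\<^sup>2) \<le> exp (- (3/4 * 2 powr real_of_int j)\<^sup>2 * t)"
    by (simp add: mult.commute)
  have "norm (dyadic_block chi s j (heat_hat uhat t) xi)
      = exp (- t * (norm xi)\<^sup>2) * norm (dyadic_block chi s j uhat xi)"
    by (simp add: dyadic_block_def heat_hat_def norm_mult mult_ac)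
  also have "\<dots> \<le> exp (- (3/4 * 2 powr real_of_int j)\<^sup>2 * t) * norm (dyadic_block chi s j uhat xi)"
    using decay by (rule mult_right_mono) simp
  finally show ?thesis .
qed (simp add: dyadic_block_def)

text \<open>The ball of radius 8/3 contains the support of phi.\<close>

definition L2_const :: real where
  "L2_const = sqrt (1 + unit_ball_vol 3 * (8/3) ^ 3)"

lemma L2_const_pos: "0 < L2_const"
  by (simp add: L2_const_def add_pos_nonneg)

lemma lp_norm_2_phi_j_le:
  assumes chi: "admissible_chi chi" and p_meas: "p \<in> borel_measurable borel"
    and f_meas: "f \<in> borel_measurable borel" and p_ge_2: "AE x in lborel. 2 \<le> p x"
  shows "lp_norm 2 (\<lambda>xi. complex_of_real (phi_j chi j xi) * f xi)
           \<le> ennreal (2 powr (real_of_int j / 2) * L2_const)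
             * vlp_norm p (dyadic_block chi (\<lambda>xi. 1 - 3 / p xi) j f)"
proof -
  let ?lam = "2 powr real_of_int j"
  have [measurable]: "phi_j chi j \<in> borel_measurable borel"
    by (rule borel_measurable_phi_j[OF chi])
  have "lp_norm 2 (\<lambda>xi. complex_of_real (phi_j chi j xi) * f xi)
      \<le> ennreal (sqrt (?lam * (1 + unit_ball_vol 3 * (8/3) ^ 3)))
        * vlp_norm p (\<lambda>xi. complex_of_real (?lam powr (1 - 3 / p xi)) * (complex_of_real (phi_j chi j xi) * f xi))"
    using p_meas f_meas p_ge_2 phi_j_nonzero_imp_annulus(2)[OF chi]
    by (intro lp_norm_2_le_scaled_vlp_norm) (auto simp: mult.commute)
  also have "sqrt (?lam * (1 + unit_ball_vol 3 * (8/3) ^ 3)) = 2 powr (real_of_int j / 2) * L2_const"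
    by (simp add: L2_const_def real_sqrt_mult powr_half_sqrt_powr)
  also have "(\<lambda>xi. complex_of_real (?lam powr (1 - 3 / p xi)) * (complex_of_real (phi_j chi j xi) * f xi))
      = dyadic_block chi (\<lambda>xi. 1 - 3 / p xi) j f"
    by (simp add: dyadic_block_def powr_powr fun_eq_iff)
  finally show ?thesis .
qed

lemma lp_norm_2_phi_j_heat_hat_le:
  assumes chi: "admissible_chi chi" and p_meas: "p \<in> borel_measurable borel"
    and uhat_meas: "uhat \<in> borel_measurable borel" and p_ge_2: "AE x in lborel. 2 \<le> p x"
    and t: "0 \<le> t"
  shows "lp_norm 2 (\<lambda>xi. complex_of_real (phi_j chi j xi) * heat_hat uhat t xi)
           \<le> ennreal (exp (- (3/4 * 2 powr real_of_int j)\<^sup>2 * t))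
             * (ennreal (2 powr (real_of_int j / 2) * L2_const)
                * vlp_norm p (dyadic_block chi (\<lambda>xi. 1 - 3 / p xi) j uhat))"
proof -
  let ?s = "\<lambda>xi. 1 - 3 / p xi"
  have [measurable]: "uhat \<in> borel_measurable borel" by (rule uhat_meas)
  have heat_meas: "heat_hat uhat t \<in> borel_measurable borel"
    unfolding heat_hat_def[abs_def] by measurable
  have p_nonneg: "AE x in lborel. 0 \<le> p x" using p_ge_2 by eventually_elim auto
  have "lp_norm 2 (\<lambda>xi. complex_of_real (phi_j chi j xi) * heat_hat uhat t xi)
      \<le> ennreal (2 powr (real_of_int j / 2) * L2_const) * vlp_norm p (dyadic_block chi ?s j (heat_hat uhat t))"
    by (rule lp_norm_2_phi_j_le[OF chi p_meas heat_meas p_ge_2])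
  also have "\<dots> \<le> ennreal (2 powr (real_of_int j / 2) * L2_const)
      * (ennreal (exp (- (3/4 * 2 powr real_of_int j)\<^sup>2 * t)) * vlp_norm p (dyadic_block chi ?s j uhat))"
    by (intro mult_left_mono vlp_norm_mono[OF _ p_nonneg] norm_dyadic_block_heat_hat_le[OF chi t]) auto
  finally show ?thesis by (simp only: mult.left_commute)
qed

lemma LFB_var_norm_heat_hat_infinity_le:
  assumes chi: "admissible_chi chi" and p_nonneg: "AE x in lborel. 0 \<le> p x"
  shows "LFB_var_norm chi \<infinity> s p (heat_hat uhat) \<le> FB_var_norm chi s p uhat"
proof -
  have "LFB_var_norm chi \<infinity> s p (heat_hat uhat) \<le> ennreal 1 * FB_var_norm chi s p uhat"
    unfolding LFB_var_norm_eq_dyadic_block FB_var_norm_eq_dyadic_block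
  proof (rule infsum_le_cmult_infsum, rule time_norm_infinity_le)
    fix j and t :: real assume t: "0 < t"
    show "vlp_norm p (dyadic_block chi s j (heat_hat uhat t))
        \<le> ennreal 1 * vlp_norm p (dyadic_block chi s j uhat)"
    proof (rule vlp_norm_mono[OF _ p_nonneg])
      fix xi
      have "norm (dyadic_block chi s j (heat_hat uhat t) xi)
          \<le> exp (- (3/4 * 2 powr real_of_int j)\<^sup>2 * t) * norm (dyadic_block chi s j uhat xi)"
        using chi t by (intro norm_dyadic_block_heat_hat_le) auto
      also have "\<dots> \<le> 1 * norm (dyadic_block chi s j uhat xi)"
        using t by (intro mult_right_mono) auto
      finally show "norm (dyadic_block chi s j (heat_hat uhat t) xi) \<le> 1 * norm (dyadic_block chi s j uhat xi)" .
    qed simp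
  qed
  then show ?thesis by simp
qed

lemma powr_heat_decay_rate:
  "(r * (3/4 * 2 powr real_of_int j)\<^sup>2) powr (1 / r)
           = (9/16 * r) powr (1 / r) * 2 powr (real_of_int j * (2 / r))"
proof -
  have sq: "(2 powr real_of_int j)\<^sup>2 = 2 powr (2 * real_of_int j)"
    by (simp add: power2_eq_square powr_add[symmetric])
  have "r * (3/4 * 2 powr real_of_int j)\<^sup>2 = (9/16 * r) * 2 powr (2 * real_of_int j)"
    unfolding power_mult_distrib sq by (simp add: power2_eq_square)
  then have "(r * (3/4 * 2 powr real_of_int j)\<^sup>2) powr (1 / r)
      = (9/16 * r) powr (1 / r) * (2 powr (2 * real_of_int j)) powr (1 / r)"
    by (simp only: powr_mult)
  also have "(2 powr (2 * real_of_int j)) powr (1 / r) = 2 powr (real_of_int j * (2 / r))"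
    by (simp add: powr_powr mult.commute)
  finally show ?thesis .
qed

lemma LFB_var_norm_heat_hat_finite_le:
  assumes chi: "admissible_chi chi" and p_nonneg: "AE x in lborel. 0 \<le> p x" and r: "1 \<le> r"
  shows "LFB_var_norm chi (ennreal r) (\<lambda>xi. s xi + 2 / r) p (heat_hat uhat)
           \<le> ennreal (1 / (9/16 * r) powr (1 / r)) * FB_var_norm chi s p uhat"
  unfolding LFB_var_norm_eq_dyadic_block FB_var_norm_eq_dyadic_block
proof (rule infsum_le_cmult_infsum)
  fix j
  define b where "b = (3/4 * 2 powr real_of_int j)\<^sup>2"
  define w where "w = 2 powr (real_of_int j * (2 / r))"
  let ?G = "vlp_norm p (dyadic_block chi s j uhat)"
  have b: "0 < b" by (simp add: b_def)
  have "time_norm (ennreal r) (\<lambda>t. vlp_norm p (dyadic_block chi (\<lambda>xi. s xi + 2 / r) j (heat_hat uhat t)))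
      \<le> ennreal (1 / (r * b) powr (1 / r)) * (ennreal w * ?G)"
  proof (rule time_norm_exp_decay_le[OF r b])
    fix t :: real assume t: "0 < t"
    have "vlp_norm p (dyadic_block chi (\<lambda>xi. s xi + 2 / r) j (heat_hat uhat t))
        \<le> ennreal (exp (- b * t) * w) * ?G"
    proof (rule vlp_norm_mono[OF _ p_nonneg])
      fix xi
      have "norm (dyadic_block chi (\<lambda>xi. s xi + 2 / r) j (heat_hat uhat t) xi)
          = w * norm (dyadic_block chi s j (heat_hat uhat t) xi)"
        by (simp add: dyadic_block_add_const norm_mult w_def)
      also have "\<dots> \<le> w * (exp (- b * t) * norm (dyadic_block chi s j uhat xi))"
        using norm_dyadic_block_heat_hat_le[OF chi, of t s j uhat xi] t
        by (intro mult_left_mono) (auto simp: b_def w_def)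
      finally show "norm (dyadic_block chi (\<lambda>xi. s xi + 2 / r) j (heat_hat uhat t) xi)
          \<le> exp (- b * t) * w * norm (dyadic_block chi s j uhat xi)"
        by (simp add: mult_ac)
    qed (simp add: w_def)
    then show "vlp_norm p (dyadic_block chi (\<lambda>xi. s xi + 2 / r) j (heat_hat uhat t))
        \<le> ennreal (exp (- b * t)) * (ennreal w * ?G)"
      by (simp add: ennreal_mult w_def mult.assoc)
  qed
  also have "ennreal (1 / (r * b) powr (1 / r)) * (ennreal w * ?G)
      = ennreal (1 / (r * b) powr (1 / r) * w) * ?G"
    by (subst ennreal_mult) (auto simp: w_def mult.assoc)
  also have "1 / (r * b) powr (1 / r) * w = 1 / (9/16 * r) powr (1 / r)"
    unfolding b_def w_def powr_heat_decay_rate by simp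
  finally show "time_norm (ennreal r) (\<lambda>t. vlp_norm p (dyadic_block chi (\<lambda>xi. s xi + 2 / r) j (heat_hat uhat t)))
      \<le> ennreal (1 / (9/16 * r) powr (1 / r)) * ?G" .
qed

lemma LFB_var_norm_heat_hat_le_FB_var_norm:
  assumes chi: "admissible_chi chi" and p_nonneg: "AE x in lborel. 0 \<le> p x" and rho: "1 \<le> rho"
  shows "\<exists>C>0. \<forall>uhat. LFB_var_norm chi rho (\<lambda>xi. s xi + (if rho = \<infinity> then 0 else 2 / enn2real rho)) p
                      (heat_hat uhat)
                    \<le> ennreal C * FB_var_norm chi s p uhat"
proof (cases rho)
  case (real r)
  then have "1 \<le> r" using rho by simp
  then show ?thesis
    using LFB_var_norm_heat_hat_finite_le[OF chi p_nonneg] real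
    by (intro exI[of _ "1 / (9/16 * r) powr (1 / r)"]) auto
next
  case top
  then show ?thesis
    using LFB_var_norm_heat_hat_infinity_le[OF chi p_nonneg] by (intro exI[of _ 1]) simp
qed

lemma LFB_norm_L1_heat_hat_le:
  assumes chi: "admissible_chi chi" and p_meas: "p \<in> borel_measurable borel"
    and uhat_meas: "uhat \<in> borel_measurable borel" and p_ge_2: "AE x in lborel. 2 \<le> p x"
  shows "LFB_norm chi 1 (3/2) 2 (heat_hat uhat)
           \<le> ennreal (16/9 * L2_const) * FB_var_norm chi (\<lambda>xi. 1 - 3 / p xi) p uhat"
  unfolding LFB_norm_def FB_var_norm_eq_dyadic_block
proof (rule infsum_le_cmult_infsum)
  fix j
  let ?b = "(3/4 * 2 powr real_of_int j)\<^sup>2"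
  let ?K = "2 powr (real_of_int j / 2) * L2_const"
  let ?G = "vlp_norm p (dyadic_block chi (\<lambda>xi. 1 - 3 / p xi) j uhat)"
  have "time_norm (ennreal 1) (\<lambda>t. lp_norm 2 (\<lambda>xi. complex_of_real (phi_j chi j xi) * heat_hat uhat t xi))
      \<le> ennreal (1 / (1 * ?b) powr (1 / 1)) * (ennreal ?K * ?G)"
    using lp_norm_2_phi_j_heat_hat_le[OF chi p_meas uhat_meas p_ge_2]
    by (intro time_norm_exp_decay_le) auto
  then have "ennreal (2 powr (real_of_int j * (3/2)))
        * time_norm 1 (\<lambda>t. lp_norm 2 (\<lambda>xi. complex_of_real (phi_j chi j xi) * heat_hat uhat t xi))
      \<le> ennreal (2 powr (real_of_int j * (3/2))) * (ennreal (1 / ?b) * (ennreal ?K * ?G))"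
    by (intro mult_left_mono) auto
  also have "\<dots> = ennreal (2 powr (real_of_int j * (3/2)) * (1 / ?b) * ?K) * ?G"
    using L2_const_pos by (simp add: ennreal_mult[symmetric] mult.assoc[symmetric])
  also have "2 powr (real_of_int j * (3/2)) * (1 / ?b) * ?K = 16/9 * L2_const"
  proof -
    have "2 powr (real_of_int j * (3/2)) * 2 powr (real_of_int j / 2) = (2 powr real_of_int j)\<^sup>2"
      by (simp add: power2_eq_square powr_add[symmetric] algebra_simps)
    then show ?thesis by (simp add: field_simps)
  qed
  finally show "ennreal (2 powr (real_of_int j * (3/2)))
        * time_norm 1 (\<lambda>t. lp_norm 2 (\<lambda>xi. complex_of_real (phi_j chi j xi) * heat_hat uhat t xi))
      \<le> ennreal (16/9 * L2_const) * ?G" .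
qed

lemma LFB_norm_Linf_heat_hat_le:
  assumes chi: "admissible_chi chi" and p_meas: "p \<in> borel_measurable borel"
    and uhat_meas: "uhat \<in> borel_measurable borel" and p_ge_2: "AE x in lborel. 2 \<le> p x"
  shows "LFB_norm chi \<infinity> (-1/2) 2 (heat_hat uhat)
           \<le> ennreal L2_const * FB_var_norm chi (\<lambda>xi. 1 - 3 / p xi) p uhat"
  unfolding LFB_norm_def FB_var_norm_eq_dyadic_block
proof (rule infsum_le_cmult_infsum)
  fix j
  let ?K = "2 powr (real_of_int j / 2) * L2_const"
  let ?G = "vlp_norm p (dyadic_block chi (\<lambda>xi. 1 - 3 / p xi) j uhat)"
  have "time_norm \<infinity> (\<lambda>t. lp_norm 2 (\<lambda>xi. complex_of_real (phi_j chi j xi) * heat_hat uhat t xi))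
      \<le> ennreal ?K * ?G"
  proof (rule time_norm_infinity_le)
    fix t :: real assume t: "0 < t"
    have "lp_norm 2 (\<lambda>xi. complex_of_real (phi_j chi j xi) * heat_hat uhat t xi)
        \<le> ennreal (exp (- (3/4 * 2 powr real_of_int j)\<^sup>2 * t)) * (ennreal ?K * ?G)"
      using t by (intro lp_norm_2_phi_j_heat_hat_le[OF chi p_meas uhat_meas p_ge_2]) auto
    also have "\<dots> \<le> 1 * (ennreal ?K * ?G)"
      using t by (intro mult_right_mono) auto
    finally show "lp_norm 2 (\<lambda>xi. complex_of_real (phi_j chi j xi) * heat_hat uhat t xi)
        \<le> ennreal ?K * ?G" by simp
  qed
  then have "ennreal (2 powr (real_of_int j * (-1/2)))
        * time_norm \<infinity> (\<lambda>t. lp_norm 2 (\<lambda>xi. complex_of_real (phi_j chi j xi) * heat_hat uhat t xi))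
      \<le> ennreal (2 powr (real_of_int j * (-1/2))) * (ennreal ?K * ?G)"
    by (intro mult_left_mono) auto
  also have "\<dots> = ennreal (2 powr (real_of_int j * (-1/2)) * ?K) * ?G"
    using L2_const_pos by (simp add: ennreal_mult[symmetric] mult.assoc[symmetric])
  also have "2 powr (real_of_int j * (-1/2)) * ?K = L2_const"
    by (simp add: powr_add[symmetric] mult.assoc[symmetric])
  finally show "ennreal (2 powr (real_of_int j * (-1/2)))
        * time_norm \<infinity> (\<lambda>t. lp_norm 2 (\<lambda>xi. complex_of_real (phi_j chi j xi) * heat_hat uhat t xi))
      \<le> ennreal L2_const * ?G" .
qed

theorem lemma5p1:
  fixes chi :: "real^3 \<Rightarrow> real" and p :: "real^3 \<Rightarrow> real" and rho :: ennreal
  assumes "admissible_chi chi"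
    and "P0_log p"
    and "AE x in lborel. 2 \<le> p x \<and> p x \<le> 6"
    and "1 \<le> rho"
  shows "\<exists>C>0. \<forall>uhat :: real^3 \<Rightarrow> complex.
           uhat \<in> borel_measurable lborel \<longrightarrow>
           FB_var_norm chi (\<lambda>xi. 1 - 3 / p xi) p uhat < \<infinity> \<longrightarrow>
           Y_norm chi rho p (heat_hat uhat) \<le> ennreal C * FB_var_norm chi (\<lambda>xi. 1 - 3 / p xi) p uhat"
proof -
  note chi = assms(1)
  have p_meas: "p \<in> borel_measurable borel" using assms(2) unfolding P0_log_def by auto
  have p_ge_2: "AE x in lborel. 2 \<le> p x" using assms(3) by eventually_elim auto
  then have p_nonneg: "AE x in lborel. 0 \<le> p x" by eventually_elim auto
  obtain C1 where "0 < C1" and var_bound: "\<And>uhat.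
      LFB_var_norm chi rho (\<lambda>xi. 1 - 3 / p xi + (if rho = \<infinity> then 0 else 2 / enn2real rho)) p (heat_hat uhat)
        \<le> ennreal C1 * FB_var_norm chi (\<lambda>xi. 1 - 3 / p xi) p uhat"
    using LFB_var_norm_heat_hat_le_FB_var_norm[OF chi p_nonneg assms(4), of "\<lambda>xi. 1 - 3 / p xi"] by auto
  define C where "C = max C1 (16/9 * L2_const)"
  show ?thesis
  proof (intro exI[of _ C] conjI allI impI)
    show "0 < C" using \<open>0 < C1\<close> by (simp add: C_def)
    fix uhat :: "real^3 \<Rightarrow> complex" assume "uhat \<in> borel_measurable lborel"
    then have uhat_meas: "uhat \<in> borel_measurable borel" by simp
    let ?FB = "FB_var_norm chi (\<lambda>xi. 1 - 3 / p xi) p uhat"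
    have "ennreal C1 * ?FB \<le> ennreal C * ?FB" "ennreal (16/9 * L2_const) * ?FB \<le> ennreal C * ?FB"
      "ennreal L2_const * ?FB \<le> ennreal C * ?FB"
      using L2_const_pos by (auto simp: C_def intro!: mult_right_mono ennreal_leI)
    then show "Y_norm chi rho p (heat_hat uhat) \<le> ennreal C * ?FB"
      using var_bound[of uhat] LFB_norm_L1_heat_hat_le[OF chi p_meas uhat_meas p_ge_2]
        LFB_norm_Linf_heat_hat_le[OF chi p_meas uhat_meas p_ge_2]
      unfolding Y_norm_def by (meson max.boundedI order_trans)
  qed
qed

end
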